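(* There is an absolute constant $c>0$ such that the following holds. Let $m,n\ge1$ be integers, $\gamma,\delta>0$, and let $x\in\mathbb{R}^n$ satisfy $\|x\|_\infty\le\delta$ and $\|x\|_2^2\ge\|x\|_\infty^2+\gamma^2$. Let $T=\pi m/\delta$. Then $$\int_0^T\prod_{i=1}^n F\!\left(\frac{x_i t}{2\pi m}\right)dt\le\frac{c}{\gamma},$$ where $F(y)=\left|\frac{\sin((2m+1)\pi y)}{(2m+1)\sin(\pi y)}\right|$ (with $F(y)=1$ for $y\in\mathbb{Z}$). *)

theory Defs
  imports "HOL-Analysis.Analysis"
begin

definition kerF :: "nat \<Rightarrow> real \<Rightarrow> real" where
  "kerF m y = (if y \<in> \<int> then 1
     else \<bar>sin ((2 * real m + 1) * pi * y) / ((2 * real m + 1) * sin (pi * y))\<bar>)"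

definition supnorm :: "nat \<Rightarrow> (nat \<Rightarrow> real) \<Rightarrow> real" where
  "supnorm n x = Max ((\<lambda>i. \<bar>x i\<bar>) ` {..<n})"

definition sqnorm2 :: "nat \<Rightarrow> (nat \<Rightarrow> real) \<Rightarrow> real" where
  "sqnorm2 n x = (\<Sum>i<n. (x i)\<^sup>2)"

end

theory Submission
  imports Defs
begin

text \<open>Write \<open>s = 2 \<pi> m \<bar>y\<bar>\<close>. On \<open>\<bar>y\<bar> \<le> 1/2\<close> the kernel satisfies
  \<open>F(y) \<le> exp (- min s\<^sup>2 1 / 20)\<close> and \<open>F(y) \<le> 3 / s\<close>. For fixed \<open>t\<close> put
  \<open>s\<^sub>i = \<bar>x\<^sub>i\<bar> t\<close> and let \<open>j\<close> index the largest coordinate, so that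
  \<open>\<Sum>\<^sub>i\<^sub>\<noteq>\<^sub>j s\<^sub>i\<^sup>2 \<ge> (\<gamma> t)\<^sup>2\<close>. If the \<open>s\<^sub>i < 1\<close> carry half of this mass, the
  Gaussian bounds give \<open>exp (-(\<gamma> t)\<^sup>2/40)\<close>. Otherwise the \<open>k \<ge> 1\<close> indices with
  \<open>s\<^sub>i \<ge> 1\<close> do; if \<open>b\<close> is the largest of them then \<open>k s\<^sub>b\<^sup>2 \<ge> (\<gamma> t)\<^sup>2/2\<close>, and
  bounding the factors at \<open>j\<close> and \<open>b\<close> by \<open>3/s\<^sub>b\<close> and the other \<open>k - 1\<close> large
  ones by \<open>exp (-1/20)\<close> gives \<open>18 k exp (-(k-1)/20) / (\<gamma> t)\<^sup>2 \<le> 360 / (\<gamma> t)\<^sup>2\<close>.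
  Hence the integrand is at most \<open>min 1 ((19 / (\<gamma> t))\<^sup>2)\<close>, whose integral over
  \<open>[0, \<infinity>)\<close> is \<open>38 / \<gamma>\<close>.\<close>

lemma abs_sin_minus_cubic_le:
  fixes x :: real
  shows "\<bar>sin x - (x - x^3/6)\<bar> \<le> \<bar>x\<bar>^5/120"
proof -
  have coeffs: "sin_coeff 0 = 0" "sin_coeff 1 = 1" "sin_coeff 2 = 0" "sin_coeff 3 = -1/6"
      "sin_coeff 4 = 0"
    by (simp_all add: sin_coeff_def fact_numeral)
  have "(\<Sum>m<5. sin_coeff m * x ^ m)
      = sin_coeff 0 * x^0 + sin_coeff 1 * x^1 + sin_coeff 2 * x^2 + sin_coeff 3 * x^3
        + sin_coeff 4 * x^4"
    by (simp only: lessThan_nat_numeral sum.insert finite_lessThan lessThan_iff)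
      (simp add: numeral_eq_Suc lessThan_Suc)
  then have "(\<Sum>m<5. sin_coeff m * x ^ m) = x - x^3/6"
    unfolding coeffs by simp
  moreover have "inverse (fact 5::real) = 1/120" by (simp add: fact_numeral)
  ultimately show ?thesis using Maclaurin_sin_bound[of x 5] by (simp only:)
qed

lemma sin_le_quintic:
  fixes x :: real
  assumes "0 \<le> x"
  shows "sin x \<le> x - x^3/6 + x^5/120"
  using abs_le_D1[OF abs_sin_minus_cubic_le[of x]] assms by simp

lemma sin_ge_cubic:
  fixes x :: real
  assumes "0 \<le> x" "x \<le> 1"
  shows "x - 7/40 * x^3 \<le> sin x"
proof -
  have "x^5 \<le> x^3" using assms by (simp add: power_decreasing)
  then show ?thesis using abs_le_D2[OF abs_sin_minus_cubic_le[of x]] assms by simp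
qed

lemma sin_ge_linear:
  fixes x :: real
  assumes "0 \<le> x" "x \<le> pi/2"
  shows "2/5 * x \<le> sin x"
proof (cases "x \<le> 1")
  case True
  have "x * x^2 \<le> x" using True assms by (simp add: mult_left_le power_le_one)
  then show ?thesis using sin_ge_cubic[of x] True assms by (simp add: power3_eq_cube power2_eq_square)
next
  case False
  have "sin 1 \<le> sin x" using False assms by (subst sin_mono_le_eq) auto
  moreover have "33/40 \<le> sin (1::real)" using sin_ge_cubic[of 1] by simp
  moreover have "x < 2" using assms pi_half_less_two by linarith
  ultimately show ?thesis by linarith
qed

lemma dirichlet_ratio_le_inverse:
  fixes N \<theta> :: real
  assumes "N > 0" "0 < \<theta>" "\<theta> \<le> pi/2"
  shows "\<bar>sin (N*\<theta>)\<bar> / (N * sin \<theta>) \<le> 5 / (2 * (N*\<theta>))"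
proof -
  have "N * (2/5 * \<theta>) \<le> N * sin \<theta>" using sin_ge_linear[of \<theta>] assms by simp
  moreover have "0 < N * (2/5 * \<theta>)" using assms by simp
  ultimately have "\<bar>sin (N*\<theta>)\<bar> / (N * sin \<theta>) \<le> 1 / (N * (2/5 * \<theta>))"
    by (intro frac_le) auto
  then show ?thesis by simp
qed

lemma dirichlet_ratio_le_quadratic:
  fixes N \<theta> :: real
  assumes N: "N \<ge> 3" and \<theta>: "0 < \<theta>" and u3: "N*\<theta> \<le> 3"
  shows "\<bar>sin (N*\<theta>)\<bar> / (N * sin \<theta>) \<le> 1 - (N*\<theta>)^2/20"
proof -
  define u where "u = N*\<theta>"
  define v where "v = u^2"
  have u0: "0 < u" using N \<theta> by (simp add: u_def)
  have "u * u \<le> 3 * 3" using u3 u0 by (intro mult_mono) (simp_all add: u_def)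
  then have v9: "0 \<le> v" "v \<le> 9" by (simp_all add: v_def power2_eq_square)
  have \<theta>u: "\<theta> \<le> u/3" using N \<theta> by (simp add: u_def field_simps)
  have \<theta>1: "\<theta> \<le> 1" using \<theta>u u3 unfolding u_def by linarith
  have \<theta>sq: "\<theta>^2 \<le> v/9"
    using power_mono[OF \<theta>u, of 2] \<theta> by (simp add: v_def power_divide)
  have sin_u_nonneg: "0 \<le> sin u" using u3 u0 pi_gt3 by (intro sin_ge_zero) (auto simp: u_def)
  have sin_u: "sin u \<le> u * (1 - v/6 + v^2/120)"
    using sin_le_quintic[of u] u0
    by (simp add: v_def algebra_simps power2_eq_square power3_eq_cube eval_nat_numeral)
  have "\<theta> * (1 - 7/360 * v) \<le> \<theta> * (1 - 7/40 * \<theta>^2)"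
    using \<theta>sq \<theta> by (intro mult_left_mono) auto
  also have "\<dots> \<le> sin \<theta>"
    using sin_ge_cubic[of \<theta>] \<theta> \<theta>1 by (simp add: algebra_simps power3_eq_cube power2_eq_square)
  finally have "N * (\<theta> * (1 - 7/360 * v)) \<le> N * sin \<theta>" using N by (intro mult_left_mono) auto
  then have denom: "u * (1 - 7/360 * v) \<le> N * sin \<theta>" by (simp add: u_def algebra_simps)
  have "(1 - v/20) * (u * (1 - 7/360 * v)) - u * (1 - v/6 + v^2/120)
      = u * (v * (700 - 53 * v) / 7200)"
    by (simp add: field_simps power2_eq_square)
  moreover have "0 \<le> u * (v * (700 - 53 * v) / 7200)" using u0 v9 by simp
  ultimately have "u * (1 - v/6 + v^2/120) \<le> (1 - v/20) * (u * (1 - 7/360 * v))" by linarith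
  also have "\<dots> \<le> (1 - v/20) * (N * sin \<theta>)" using denom v9 by (intro mult_left_mono) auto
  finally have "\<bar>sin u\<bar> \<le> (1 - v/20) * (N * sin \<theta>)" using sin_u sin_u_nonneg by simp
  moreover have "0 < N * sin \<theta>" using N \<theta> \<theta>1 pi_gt3 by (intro mult_pos_pos sin_gt_zero) auto
  ultimately have "\<bar>sin u\<bar> / (N * sin \<theta>) \<le> 1 - v/20" by (simp add: divide_simps)
  then show ?thesis by (simp add: u_def v_def)
qed

lemma dirichlet_ratio_le_exp:
  fixes N \<theta> :: real
  assumes N: "N \<ge> 3" and \<theta>: "0 < \<theta>" "\<theta> \<le> pi/2"
  shows "\<bar>sin (N*\<theta>)\<bar> / (N * sin \<theta>) \<le> exp (- min ((N*\<theta>)^2) 1 / 20)"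
proof (cases "N*\<theta> \<le> 3")
  case True
  have "\<bar>sin (N*\<theta>)\<bar> / (N * sin \<theta>) \<le> 1 - (N*\<theta>)^2/20"
    using dirichlet_ratio_le_quadratic[OF N \<theta>(1) True] .
  also have "\<dots> \<le> exp (- ((N*\<theta>)^2) / 20)" using exp_ge_add_one_self[of "- ((N*\<theta>)^2) / 20"] by simp
  also have "\<dots> \<le> exp (- min ((N*\<theta>)^2) 1 / 20)" by simp
  finally show ?thesis .
next
  case False
  have "\<bar>sin (N*\<theta>)\<bar> / (N * sin \<theta>) \<le> 5 / (2 * (N*\<theta>))"
    using dirichlet_ratio_le_inverse[of N \<theta>] N \<theta> by simp
  also have "\<dots> \<le> 1 - 1/20" using False by (simp add: divide_simps)
  also have "\<dots> \<le> exp (- 1/20)" using exp_ge_add_one_self[of "- 1/20"] by simp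
  also have "\<dots> \<le> exp (- min ((N*\<theta>)^2) 1 / 20)" by simp
  finally show ?thesis .
qed

lemma kerF_nonneg: "0 \<le> kerF m y"
  by (simp add: kerF_def)

lemma kerF_minus: "kerF m (- y) = kerF m y"
  by (simp add: kerF_def abs_divide abs_mult)

lemma kerF_eq_dirichlet_ratio:
  assumes "0 < y" "y < 1"
  shows "kerF m y = \<bar>sin ((2 * real m + 1) * (pi * y))\<bar> / ((2 * real m + 1) * sin (pi * y))"
proof -
  have "y \<notin> \<int>" using assms Ints_nonzero_abs_less1[of y] by auto
  moreover have "0 < sin (pi * y)" using assms by (intro sin_gt_zero) auto
  ultimately show ?thesis by (simp add: kerF_def abs_divide abs_mult mult.assoc)
qed

lemma kerF_scaled_le_pos:
  fixes s :: real
  assumes m: "m \<ge> 1" and s: "0 < s" "s \<le> pi * real m"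
  shows "kerF m (s / (2 * pi * real m)) \<le> exp (- min (s^2) 1 / 20)"
    and "kerF m (s / (2 * pi * real m)) \<le> 3 / s"
proof -
  define N where "N = 2 * real m + 1"
  define \<theta> where "\<theta> = s / (2 * real m)"
  have N3: "N \<ge> 3" using m by (simp add: N_def)
  have \<theta>: "0 < \<theta>" "\<theta> \<le> pi/2" using m s by (auto simp: \<theta>_def field_simps)
  have sN\<theta>: "s \<le> N * \<theta>" using m s by (simp add: N_def \<theta>_def field_simps)
  have "kerF m (s / (2 * pi * real m)) = \<bar>sin (N * \<theta>)\<bar> / (N * sin \<theta>)"
    using m s by (subst kerF_eq_dirichlet_ratio) (auto simp: N_def \<theta>_def field_simps)
  note ratio = this
  have "s^2 \<le> (N * \<theta>)^2" using sN\<theta> s by (intro power_mono) auto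
  then have "exp (- min ((N*\<theta>)^2) 1 / 20) \<le> exp (- min (s^2) 1 / 20)" by simp
  then show "kerF m (s / (2 * pi * real m)) \<le> exp (- min (s^2) 1 / 20)"
    using dirichlet_ratio_le_exp[OF N3 \<theta>] ratio by linarith
  have "5 / (2 * (N * \<theta>)) \<le> 5 / (2 * s)" using sN\<theta> s N3 \<theta> by (intro divide_left_mono) auto
  also have "\<dots> \<le> 3 / s" using s by (simp add: divide_simps)
  finally show "kerF m (s / (2 * pi * real m)) \<le> 3 / s"
    using dirichlet_ratio_le_inverse[of N \<theta>] N3 \<theta> ratio by simp
qed

lemma kerF_scaled_le:
  fixes s :: real
  assumes m: "m \<ge> 1" and s: "\<bar>s\<bar> \<le> pi * real m"
  shows "kerF m (s / (2 * pi * real m)) \<le> exp (- min (s^2) 1 / 20)"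
    and "s \<noteq> 0 \<Longrightarrow> kerF m (s / (2 * pi * real m)) \<le> 3 / \<bar>s\<bar>"
proof -
  have abs_eq: "kerF m (s / (2 * pi * real m)) = kerF m (\<bar>s\<bar> / (2 * pi * real m))"
  proof (cases "s \<ge> 0")
    case False
    then have "\<bar>s\<bar> / (2 * pi * real m) = - (s / (2 * pi * real m))" by simp
    then show ?thesis by (simp only: kerF_minus)
  qed simp
  show "kerF m (s / (2 * pi * real m)) \<le> exp (- min (s^2) 1 / 20)"
  proof (cases "s = 0")
    case True
    then show ?thesis by (simp add: kerF_def)
  next
    case False
    then show ?thesis using kerF_scaled_le_pos(1)[OF m, of "\<bar>s\<bar>"] s abs_eq by simp
  qed
  show "kerF m (s / (2 * pi * real m)) \<le> 3 / \<bar>s\<bar>" if "s \<noteq> 0"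
    using kerF_scaled_le_pos(2)[OF m, of "\<bar>s\<bar>"] s abs_eq that by simp
qed

lemma prod_le_prod_subset:
  fixes f :: "'a \<Rightarrow> 'b::linordered_semidom"
  assumes "finite B" "A \<subseteq> B" "\<And>i. i \<in> B \<Longrightarrow> 0 \<le> f i \<and> f i \<le> 1"
  shows "prod f B \<le> prod f A"
proof -
  have "prod f B = prod f (B - A) * prod f A" using assms by (simp add: prod.subset_diff)
  moreover have "prod f (B - A) \<le> 1" using assms by (intro prod_le_1) auto
  moreover have "0 \<le> prod f A" using assms by (intro prod_nonneg) auto
  ultimately show ?thesis using mult_right_mono[of "prod f (B - A)" 1 "prod f A"] by simp
qed

lemma exp_neg_le_inverse:
  fixes z :: real
  assumes "z > 0"
  shows "exp (- z) \<le> 1 / z"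
proof -
  have "z \<le> exp z" using exp_ge_add_one_self[of z] by linarith
  then show ?thesis using assms by (simp add: exp_minus divide_simps)
qed

lemma mult_exp_neg_le:
  fixes x :: real
  shows "x * exp (- (x - 1) / 20) \<le> 20"
proof -
  have "x / 20 \<le> 1 + (x - 1) / 20" by (simp add: field_simps)
  also have "\<dots> \<le> exp ((x - 1) / 20)" by (rule exp_ge_add_one_self)
  finally have "x \<le> 20 * exp ((x - 1) / 20)" by simp
  then have "x * exp (- (x - 1) / 20) \<le> 20 * exp ((x - 1) / 20) * exp (- (x - 1) / 20)"
    by (rule mult_right_mono) simp
  also have "\<dots> = 20" by (simp add: mult.assoc field_simps flip: exp_add)
  finally show ?thesis .
qed

lemma prod_le_of_gaussian_mass:
  fixes f s :: "'a \<Rightarrow> real"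
  assumes fin: "finite A" and "C \<subseteq> A" and f01: "\<And>i. i \<in> A \<Longrightarrow> 0 \<le> f i \<and> f i \<le> 1"
    and gauss: "\<And>i. i \<in> C \<Longrightarrow> f i \<le> exp (- ((s i)^2) / 20)"
    and \<Gamma>: "\<Gamma> > 0" and mass: "\<Gamma>^2 / 2 \<le> (\<Sum>i\<in>C. (s i)^2)"
  shows "prod f A \<le> 40 / \<Gamma>^2"
proof -
  have finC: "finite C" using fin \<open>C \<subseteq> A\<close> by (rule finite_subset[rotated])
  have "prod f A \<le> prod f C" using assms by (intro prod_le_prod_subset) auto
  also have "\<dots> \<le> (\<Prod>i\<in>C. exp (- ((s i)^2) / 20))"
    using f01 gauss \<open>C \<subseteq> A\<close> by (intro prod_mono) auto
  also have "\<dots> = exp (- (\<Sum>i\<in>C. (s i)^2) / 20)"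
    using finC by (simp add: exp_sum sum_divide_distrib flip: sum_negf)
  also have "\<dots> \<le> exp (- (\<Gamma>^2 / 40))" using mass by simp
  also have "\<dots> \<le> 40 / \<Gamma>^2" using exp_neg_le_inverse[of "\<Gamma>^2 / 40"] \<Gamma> by simp
  finally show ?thesis .
qed

lemma prod_le_of_large_mass:
  fixes f s :: "'a \<Rightarrow> real"
  assumes fin: "finite A" and j: "j \<in> A" and B: "B \<subseteq> A - {j}" "B \<noteq> {}"
    and f01: "\<And>i. i \<in> A \<Longrightarrow> 0 \<le> f i \<and> f i \<le> 1"
    and large: "\<And>i. i \<in> B \<Longrightarrow> f i \<le> exp (- 1 / 20)"
    and inv: "\<And>i. i \<in> insert j B \<Longrightarrow> f i \<le> 3 / s i"
    and s: "\<And>i. i \<in> B \<Longrightarrow> 0 < s i \<and> s i \<le> s j"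
    and \<Gamma>: "\<Gamma> > 0" and mass: "\<Gamma>^2 / 2 \<le> (\<Sum>i\<in>B. (s i)^2)"
  shows "prod f A \<le> 360 / \<Gamma>^2"
proof -
  have finB: "finite B" using fin B(1) finite_subset by blast
  obtain b where b: "b \<in> B" and b_max: "\<And>i. i \<in> B \<Longrightarrow> s i \<le> s b"
    using Max_in[of "s ` B"] Max_ge[of "s ` B"] finB B(2) by fastforce
  define k where "k = card B"
  have k1: "1 \<le> k" using finB B(2) by (simp add: k_def Suc_le_eq card_gt_0_iff)
  have sb: "0 < s b" "s b \<le> s j" using s b by auto
  have "(\<Sum>i\<in>B. (s i)^2) \<le> (\<Sum>i\<in>B. (s b)^2)"
    using s b_max by (intro sum_mono power_mono) (auto simp: less_imp_le)
  then have "\<Gamma>^2 / 2 \<le> real k * (s b)^2" using mass by (simp add: k_def)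
  then have inv_sb: "1 / (s b)^2 \<le> 2 * real k / \<Gamma>^2"
    using sb \<Gamma> by (simp add: k_def divide_simps)
  have "3 / s j \<le> 3 / s b" using sb by (intro divide_left_mono) auto
  then have fj: "f j \<le> 3 / s b" using inv[of j] by simp
  have fb: "f b \<le> 3 / s b" using inv b by blast
  have "prod f A \<le> prod f (insert j B)"
    using fin j B(1) f01 by (intro prod_le_prod_subset) auto
  also have "\<dots> = f j * (f b * prod f (B - {b}))"
  proof -
    have "j \<notin> B" using B(1) by auto
    then show ?thesis using finB b by (simp add: prod.remove)
  qed
  also have "\<dots> \<le> (3 / s b) * ((3 / s b) * (\<Prod>i\<in>B - {b}. exp (- 1 / 20)))"
  proof -
    have "0 \<le> prod f (B - {b})" using f01 B(1) by (intro prod_nonneg) auto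
    moreover have "prod f (B - {b}) \<le> (\<Prod>i\<in>B - {b}. exp (- 1 / 20))"
      using f01 B(1) large by (intro prod_mono) auto
    ultimately show ?thesis
      using fj fb f01 j b B(1) sb by (intro mult_mono mult_nonneg_nonneg) auto
  qed
  also have "(\<Prod>i\<in>B - {b}. exp (- 1 / 20 :: real)) = exp (- (real k - 1) / 20)"
    using finB b k1 by (simp add: k_def card_Diff_singleton field_simps flip: exp_of_nat_mult)
  also have "(3 / s b) * ((3 / s b) * exp (- (real k - 1) / 20))
      = 9 * (1 / (s b)^2) * exp (- (real k - 1) / 20)"
    by (simp add: power2_eq_square)
  also have "\<dots> \<le> 9 * (2 * real k / \<Gamma>^2) * exp (- (real k - 1) / 20)"
    using inv_sb by (intro mult_right_mono mult_left_mono) auto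
  also have "\<dots> = 18 * (real k * exp (- (real k - 1) / 20)) / \<Gamma>^2" by simp
  also have "\<dots> \<le> 18 * 20 / \<Gamma>^2"
    using mult_exp_neg_le[of "real k"] by (intro divide_right_mono mult_left_mono) auto
  finally show ?thesis by simp
qed

lemma prod_le_inverse_square:
  fixes f s :: "'a \<Rightarrow> real"
  assumes fin: "finite A" and j: "j \<in> A"
    and f0: "\<And>i. i \<in> A \<Longrightarrow> 0 \<le> f i"
    and gauss: "\<And>i. i \<in> A \<Longrightarrow> f i \<le> exp (- min ((s i)^2) 1 / 20)"
    and inv: "\<And>i. i \<in> A \<Longrightarrow> 0 < s i \<Longrightarrow> f i \<le> 3 / s i"
    and s: "\<And>i. i \<in> A \<Longrightarrow> 0 \<le> s i \<and> s i \<le> s j"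
    and \<Gamma>: "\<Gamma> > 0" and mass: "\<Gamma>^2 \<le> (\<Sum>i\<in>A - {j}. (s i)^2)"
  shows "prod f A \<le> 360 / \<Gamma>^2"
proof -
  have f01: "0 \<le> f i \<and> f i \<le> 1" if "i \<in> A" for i
    using f0[OF that] gauss[OF that] order_trans by fastforce
  define B where "B = {i \<in> A - {j}. 1 \<le> s i}"
  define C where "C = {i \<in> A - {j}. s i < 1}"
  have "(\<Sum>i\<in>A - {j}. (s i)^2) = (\<Sum>i\<in>B. (s i)^2) + (\<Sum>i\<in>C. (s i)^2)"
    using fin by (subst sum.union_disjoint[symmetric]) (auto simp: B_def C_def intro: sum.cong)
  then consider "\<Gamma>^2 / 2 \<le> (\<Sum>i\<in>C. (s i)^2)" | "\<Gamma>^2 / 2 \<le> (\<Sum>i\<in>B. (s i)^2)"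
    using mass by linarith
  then show ?thesis
  proof cases
    case 1
    have "f i \<le> exp (- ((s i)^2) / 20)" if "i \<in> C" for i
    proof -
      have "(s i)^2 \<le> 1" using that s[of i] by (auto simp: C_def power_le_one)
      then show ?thesis using gauss[of i] that by (simp add: C_def)
    qed
    then have "prod f A \<le> 40 / \<Gamma>^2"
      using prod_le_of_gaussian_mass[OF fin _ f01 _ \<Gamma> 1] by (auto simp: C_def)
    also have "\<dots> \<le> 360 / \<Gamma>^2" using \<Gamma> by (simp add: divide_right_mono)
    finally show ?thesis .
  next
    case 2
    have B_ne: "B \<noteq> {}"
    proof
      assume "B = {}"
      then show False using 2 \<Gamma> by simp
    qed
    have large: "f i \<le> exp (- 1 / 20)" if "i \<in> B" for i
    proof -
      have "1 \<le> (s i)^2" using that by (simp add: B_def one_le_power)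
      then show ?thesis using gauss[of i] that by (simp add: B_def)
    qed
    have inv_large: "f i \<le> 3 / s i" if "i \<in> insert j B" for i
    proof (cases "i = j")
      case True
      obtain b where "b \<in> B" using B_ne by blast
      then have "0 < s j" using s[of b] by (auto simp: B_def)
      then show ?thesis using inv j True by simp
    next
      case False
      then have "i \<in> A" "1 \<le> s i" using that by (auto simp: B_def)
      then show ?thesis using inv by simp
    qed
    have s_large: "0 < s i \<and> s i \<le> s j" if "i \<in> B" for i
      using that s[of i] by (auto simp: B_def)
    have "B \<subseteq> A - {j}" by (auto simp: B_def)
    from prod_le_of_large_mass[OF fin j this B_ne f01 large inv_large s_large \<Gamma> 2]
    show ?thesis .
  qed
qed

lemma supnorm_attained:
  assumes "n \<ge> 1"
  obtains j where "j < n" "\<bar>x j\<bar> = supnorm n x" "\<And>i. i < n \<Longrightarrow> \<bar>x i\<bar> \<le> supnorm n x"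
proof -
  have "(\<lambda>i. \<bar>x i\<bar>) ` {..<n} \<noteq> {}" using assms by (auto simp: lessThan_empty_iff)
  then have "supnorm n x \<in> (\<lambda>i. \<bar>x i\<bar>) ` {..<n}" unfolding supnorm_def by (intro Max_in) auto
  moreover have "\<bar>x i\<bar> \<le> supnorm n x" if "i < n" for i
    unfolding supnorm_def using that by (intro Max_ge) auto
  ultimately show ?thesis using that by force
qed

lemma prod_kerF_le:
  fixes x :: "nat \<Rightarrow> real"
  assumes m: "m \<ge> 1" and n: "n \<ge> 1" and \<gamma>: "\<gamma> > 0" and \<delta>: "\<delta> > 0"
    and sup: "supnorm n x \<le> \<delta>" and sq: "sqnorm2 n x \<ge> (supnorm n x)\<^sup>2 + \<gamma>\<^sup>2"
    and t: "0 \<le> t" "t \<le> pi * real m / \<delta>"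
  shows "(\<Prod>i<n. kerF m (x i * t / (2 * pi * real m))) \<le> 1"
    and "0 < t \<Longrightarrow> (\<Prod>i<n. kerF m (x i * t / (2 * pi * real m))) \<le> 360 / (\<gamma> * t)^2"
proof -
  obtain j where j: "j < n" "\<bar>x j\<bar> = supnorm n x" and le_sup: "\<And>i. i < n \<Longrightarrow> \<bar>x i\<bar> \<le> supnorm n x"
    using supnorm_attained[OF n] by blast
  have in_range: "\<bar>x i * t\<bar> \<le> pi * real m" if "i < n" for i
  proof -
    have "\<bar>x i * t\<bar> = \<bar>x i\<bar> * t" using t by (simp add: abs_mult)
    also have "\<dots> \<le> \<delta> * (pi * real m / \<delta>)" using le_sup[OF that] sup t by (intro mult_mono) auto
    also have "\<dots> = pi * real m" using \<delta> by simp
    finally show ?thesis .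
  qed
  have gauss: "kerF m (x i * t / (2 * pi * real m)) \<le> exp (- min ((\<bar>x i\<bar> * t)^2) 1 / 20)"
    if "i < n" for i
    using kerF_scaled_le(1)[OF m in_range[OF that]] by (simp add: power_mult_distrib)
  have inv: "kerF m (x i * t / (2 * pi * real m)) \<le> 3 / (\<bar>x i\<bar> * t)"
    if "i < n" "0 < \<bar>x i\<bar> * t" for i
  proof -
    have "x i * t \<noteq> 0" using that(2) by auto
    then show ?thesis using kerF_scaled_le(2)[OF m in_range[OF that(1)]] t by (simp add: abs_mult)
  qed
  have kerF_le_1: "kerF m (x i * t / (2 * pi * real m)) \<le> 1" if "i < n" for i
    using gauss[OF that] order_trans by fastforce
  show "(\<Prod>i<n. kerF m (x i * t / (2 * pi * real m))) \<le> 1"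
    using kerF_nonneg kerF_le_1 by (intro prod_le_1) auto
  assume "0 < t"
  have "(x j)^2 = (supnorm n x)^2" using j(2) by (metis power2_abs)
  then have "\<gamma>\<^sup>2 \<le> (\<Sum>i\<in>{..<n} - {j}. (x i)^2)"
    using sq j(1) by (simp add: sqnorm2_def sum.remove)
  then have "(\<gamma> * t)^2 \<le> (\<Sum>i\<in>{..<n} - {j}. (x i)^2) * t^2"
    unfolding power_mult_distrib by (rule mult_right_mono) simp
  also have "\<dots> = (\<Sum>i\<in>{..<n} - {j}. (\<bar>x i\<bar> * t)^2)"
    by (simp add: sum_distrib_right power_mult_distrib)
  finally have "(\<gamma> * t)^2 \<le> (\<Sum>i\<in>{..<n} - {j}. (\<bar>x i\<bar> * t)^2)" .
  then show "(\<Prod>i<n. kerF m (x i * t / (2 * pi * real m))) \<le> 360 / (\<gamma> * t)^2"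
  proof (rule prod_le_inverse_square[where s="\<lambda>i. \<bar>x i\<bar> * t" and j=j, rotated -1])
    show "finite {..<n}" "j \<in> {..<n}" "0 < \<gamma> * t" using j \<gamma> \<open>0 < t\<close> by auto
    show "0 \<le> \<bar>x i\<bar> * t \<and> \<bar>x i\<bar> * t \<le> \<bar>x j\<bar> * t" if "i \<in> {..<n}" for i
      using le_sup[of i] j(2) that t by (simp add: mult_right_mono)
  qed (use gauss inv kerF_nonneg in blast)+
qed

lemma has_integral_min_inverse_square:
  fixes r T :: real
  assumes r: "r > 0" and T: "T \<ge> 0"
  obtains I where "((\<lambda>t. if t \<le> r then 1 else r^2/t^2) has_integral I) {0..T}" "I \<le> 2*r"
proof (cases "T \<le> r")
  case True
  have "((\<lambda>t. 1) has_integral T) {0..T}" using has_integral_const_real[of "1::real" 0 T] T by simp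
  then have "((\<lambda>t. if t \<le> r then 1 else r^2/t^2) has_integral T) {0..T}"
    using True by (subst has_integral_cong[where g="\<lambda>t. 1"]) auto
  then show ?thesis using that True r by auto
next
  case False
  have "((\<lambda>t. 1) has_integral r) {0..r}" using has_integral_const_real[of "1::real" 0 r] r by simp
  then have left: "((\<lambda>t. if t \<le> r then 1 else r^2/t^2) has_integral r) {0..r}"
    by (subst has_integral_cong[where g="\<lambda>t. 1"]) auto
  have "((\<lambda>t. r^2/t^2) has_integral (- (r^2/T)) - (- (r^2/r))) {r..T}"
  proof (rule fundamental_theorem_of_calculus)
    show "r \<le> T" using False by simp
    fix t assume "t \<in> {r..T}"
    then have "t > 0" using r by auto
    then have "((\<lambda>t. - (r^2/t)) has_real_derivative (r^2/t^2)) (at t within {r..T})"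
      by (auto intro!: derivative_eq_intros simp: power2_eq_square field_simps)
    then show "((\<lambda>t. - (r^2/t)) has_vector_derivative (r^2/t^2)) (at t within {r..T})"
      by (simp add: has_real_derivative_iff_has_vector_derivative)
  qed
  then have right: "((\<lambda>t. if t \<le> r then 1 else r^2/t^2) has_integral (r - r^2/T)) {r..T}"
    using r by (subst has_integral_cong[where g="\<lambda>t. r^2/t^2"]) (auto simp: power2_eq_square)
  have "((\<lambda>t. if t \<le> r then 1 else r^2/t^2) has_integral (r + (r - r^2/T))) {0..T}"
    using left right False r by (intro has_integral_combine) auto
  moreover have "r + (r - r^2/T) \<le> 2*r" using T by simp
  ultimately show ?thesis using that by blast
qed

theorem lemma5p8:
  "\<exists>c::real. c > 0 \<and>
     (\<forall>(m::nat) (n::nat) (\<gamma>::real) (\<delta>::real) (x::nat \<Rightarrow> real).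
        m \<ge> 1 \<longrightarrow> n \<ge> 1 \<longrightarrow> \<gamma> > 0 \<longrightarrow> \<delta> > 0 \<longrightarrow>
        supnorm n x \<le> \<delta> \<longrightarrow>
        sqnorm2 n x \<ge> (supnorm n x)\<^sup>2 + \<gamma>\<^sup>2 \<longrightarrow>
        integral {0 .. pi * real m / \<delta>}
          (\<lambda>t. \<Prod>i<n. kerF m (x i * t / (2 * pi * real m))) \<le> c / \<gamma>)"
proof (intro exI[of _ 38] conjI allI impI)
  show "(0::real) < 38" by simp
  fix m n :: nat and \<gamma> \<delta> :: real and x :: "nat \<Rightarrow> real"
  assume m: "m \<ge> 1" and n: "n \<ge> 1" and \<gamma>: "\<gamma> > 0" and \<delta>: "\<delta> > 0"
    and sup: "supnorm n x \<le> \<delta>" and sq: "sqnorm2 n x \<ge> (supnorm n x)\<^sup>2 + \<gamma>\<^sup>2"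
  define r where "r = 19 / \<gamma>"
  define H where "H = (\<lambda>t::real. if t \<le> r then 1 else r^2 / t^2)"
  have r: "r > 0" using \<gamma> by (simp add: r_def)
  have majorant: "(\<Prod>i<n. kerF m (x i * t / (2 * pi * real m))) \<le> H t"
    if "t \<in> {0 .. pi * real m / \<delta>}" for t
  proof (cases "t \<le> r")
    case True
    then show ?thesis using prod_kerF_le(1)[OF m n \<gamma> \<delta> sup sq] that by (simp add: H_def)
  next
    case False
    then have "0 < t" using r by simp
    then have "(\<Prod>i<n. kerF m (x i * t / (2 * pi * real m))) \<le> 360 / (\<gamma> * t)^2"
      using prod_kerF_le(2)[OF m n \<gamma> \<delta> sup sq] that by simp
    also have "\<dots> \<le> r^2 / t^2" using \<gamma> \<open>0 < t\<close> by (simp add: r_def power_divide divide_simps)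
    finally show ?thesis using False by (simp add: H_def)
  qed
  obtain I where HI: "(H has_integral I) {0 .. pi * real m / \<delta>}" and "I \<le> 2 * r"
    using has_integral_min_inverse_square[OF r, of "pi * real m / \<delta>"] \<delta> unfolding H_def by auto
  then have "I \<le> 38 / \<gamma>" by (simp add: r_def)
  show "integral {0 .. pi * real m / \<delta>} (\<lambda>t. \<Prod>i<n. kerF m (x i * t / (2 * pi * real m)))
      \<le> 38 / \<gamma>"
  proof (cases "(\<lambda>t. \<Prod>i<n. kerF m (x i * t / (2 * pi * real m))) integrable_on {0 .. pi * real m / \<delta>}")
    case True
    then have "integral {0 .. pi * real m / \<delta>} (\<lambda>t. \<Prod>i<n. kerF m (x i * t / (2 * pi * real m))) \<le> I"
      using HI majorant by (intro has_integral_le[OF integrable_integral]) auto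
    then show ?thesis using \<open>I \<le> 38 / \<gamma>\<close> by linarith
  next
    case False
    then show ?thesis using \<gamma> by (simp add: not_integrable_integral)
  qed
qed

end
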